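(* Let $G$ be a graph, $b\ge0$, $\beta:E(G)\to\{0,1,2,3\}$, $C$ a vertex cover of $G$, and let $\delta$ be a $b$-bend $\beta$-restricted RAC drawing of $G$. Let $T$ be a type whose vertices have exactly two neighbors in $C$, and let $T'\subseteq T$ consist of all members of $T$ which have no bends in $\delta$. Then $T'$ contains at most four members that are involved in crossings with other members of $T'$ in $\delta$.
   Context: All graphs are simple and undirected. A drawing of a graph $G=(V,E)$ maps vertices injectively to points of $\mathbb{R}^2$ and each edge $uv$ to a simple curve joining the images of $u$ and $v$, such that no vertex image lies in the relative interior of the image of an edge not incident to it. A polyline drawing is a drawing in which each edge is drawn as a union of closed straight-line segments $\lambda_1,\dots,\lambda_t$, where consecutive segments share exactly one endpoint and form an angle different from $180^\circ$, and non-consecutive segments are disjoint; the shared points are the bends of the edge. A crossing of two edges is a common point of the relative interiors of their drawings; drawings have finitely many crossings. Two edges have a right-angle crossing if the crossing lies in the relative interiors of the respective segments and these segments are orthogonal. Given $b\in\mathbb{N}$ and $\beta:E\to\{0,1,2,3\}$, a $b$-bend $\beta$-restricted RAC drawing of $G$ is a polyline drawing in which every crossing is a right-angle crossing, the total number of bends is at most $b$, and each edge $e$ has at most $\beta(e)$ bends. Types: $V(G)\setminus C$ is partitioned so that two vertices have the same type iff they have the same set of neighbors in $C$. A member of a type is a vertex of the type together with its incident edges; a member has no bends if none of its incident edges has a bend, and a member is involved in a crossing if one of its incident edges is. *)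

theory Defs
  imports "HOL-Analysis.Analysis"
begin

type_synonym pt = "real \<times> real"

definition simple_graph :: "'v set \<Rightarrow> 'v set set \<Rightarrow> bool" where
  "simple_graph V E \<longleftrightarrow> finite V \<and> (\<forall>e\<in>E. e \<subseteq> V \<and> card e = 2)"

definition nbrs :: "'v set set \<Rightarrow> 'v \<Rightarrow> 'v set" where
  "nbrs E v = {u. {u, v} \<in> E}"

definition vertex_cover :: "'v set \<Rightarrow> 'v set set \<Rightarrow> 'v set \<Rightarrow> bool" where
  "vertex_cover V E C \<longleftrightarrow> C \<subseteq> V \<and> (\<forall>e\<in>E. e \<inter> C \<noteq> {})"

definition is_type :: "'v set \<Rightarrow> 'v set set \<Rightarrow> 'v set \<Rightarrow> 'v set \<Rightarrow> bool" where
  "is_type V E C T \<longleftrightarrow>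
     (\<exists>v\<in>V - C. T = {w \<in> V - C. nbrs E w \<inter> C = nbrs E v \<inter> C})"

text \<open>A polyline is given by its list of points p0,...,pt (endpoints and bends in order).
  Segment i is [p_i, p_(i+1)].\<close>
definition seg :: "pt list \<Rightarrow> nat \<Rightarrow> pt set" where
  "seg ps i = closed_segment (ps ! i) (ps ! Suc i)"

definition polyline :: "pt list \<Rightarrow> bool" where
  "polyline ps \<longleftrightarrow> length ps \<ge> 2
     \<and> (\<forall>i. Suc i < length ps \<longrightarrow> ps ! i \<noteq> ps ! Suc i)
     \<and> (\<forall>i. i + 2 < length ps \<longrightarrow>
           seg ps i \<inter> seg ps (Suc i) = {ps ! Suc i}
         \<and> \<not> collinear {ps ! i, ps ! Suc i, ps ! (i + 2)})
     \<and> (\<forall>i j. Suc i < j \<longrightarrow> Suc j < length ps \<longrightarrow> seg ps i \<inter> seg ps j = {})"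

definition curve :: "pt list \<Rightarrow> pt set" where
  "curve ps = (\<Union>i\<in>{i. Suc i < length ps}. seg ps i)"

definition edge_interior :: "pt list \<Rightarrow> pt set" where
  "edge_interior ps = curve ps - {hd ps, last ps}"

definition bends :: "pt list \<Rightarrow> nat" where
  "bends ps = length ps - 2"

definition polyline_drawing ::
  "'v set \<Rightarrow> 'v set set \<Rightarrow> ('v \<Rightarrow> pt) \<Rightarrow> ('v set \<Rightarrow> pt list) \<Rightarrow> bool" where
  "polyline_drawing V E pos pl \<longleftrightarrow>
     inj_on pos V
   \<and> (\<forall>e\<in>E. polyline (pl e) \<and> {hd (pl e), last (pl e)} = pos ` e)
   \<and> (\<forall>e\<in>E. \<forall>v\<in>V. v \<notin> e \<longrightarrow> pos v \<notin> edge_interior (pl e))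
   \<and> finite {p. \<exists>e\<in>E. \<exists>f\<in>E. e \<noteq> f \<and> p \<in> edge_interior (pl e) \<inter> edge_interior (pl f)}"

definition crosses :: "('v set \<Rightarrow> pt list) \<Rightarrow> 'v set \<Rightarrow> 'v set \<Rightarrow> bool" where
  "crosses pl e f \<longleftrightarrow> e \<noteq> f \<and> edge_interior (pl e) \<inter> edge_interior (pl f) \<noteq> {}"

definition right_angle_at :: "pt list \<Rightarrow> pt list \<Rightarrow> pt \<Rightarrow> bool" where
  "right_angle_at ps qs p \<longleftrightarrow>
     (\<exists>i j. Suc i < length ps \<and> Suc j < length qs
        \<and> p \<in> open_segment (ps ! i) (ps ! Suc i)
        \<and> p \<in> open_segment (qs ! j) (qs ! Suc j)
        \<and> inner (ps ! Suc i - ps ! i) (qs ! Suc j - qs ! j) = 0)"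

definition rac_drawing ::
  "'v set \<Rightarrow> 'v set set \<Rightarrow> nat \<Rightarrow> ('v set \<Rightarrow> nat) \<Rightarrow> ('v \<Rightarrow> pt) \<Rightarrow> ('v set \<Rightarrow> pt list) \<Rightarrow> bool" where
  "rac_drawing V E b \<beta> pos pl \<longleftrightarrow>
     polyline_drawing V E pos pl
   \<and> (\<forall>e\<in>E. \<forall>f\<in>E. e \<noteq> f \<longrightarrow>
        (\<forall>p \<in> edge_interior (pl e) \<inter> edge_interior (pl f). right_angle_at (pl e) (pl f) p))
   \<and> (\<Sum>e\<in>E. bends (pl e)) \<le> b
   \<and> (\<forall>e\<in>E. bends (pl e) \<le> \<beta> e)"

definition member_no_bends :: "'v set set \<Rightarrow> ('v set \<Rightarrow> pt list) \<Rightarrow> 'v \<Rightarrow> bool" where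
  "member_no_bends E pl v \<longleftrightarrow> (\<forall>e\<in>E. v \<in> e \<longrightarrow> bends (pl e) = 0)"

end

theory Submission
  imports Defs
begin

text \<open>Let \<open>a\<close> and \<open>c\<close> be the two neighbours in \<open>C\<close> of the type, drawn at \<open>A\<close> and \<open>B\<close>. A member
  \<open>v\<close> without bends is drawn as the two segments \<open>vA\<close> and \<open>vB\<close>. Two segments ending in the
  same point cannot cross at a right angle (at a common interior point they leave their common
  endpoint in the same direction), so every crossing is between some \<open>vA\<close> and some \<open>wB\<close>, and
  orthogonality puts \<open>v\<close> and \<open>w\<close> strictly on the same side of the line \<open>AB\<close>. On one side, let
  \<open>a v\<close> and \<open>b v\<close> be the cotangents of the angles of \<open>v\<close> at \<open>A\<close> and at \<open>B\<close>. Then \<open>vA\<close> and \<open>wB\<close>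
  cross iff \<open>a w < a v\<close> and \<open>b v < b w\<close>, and then \<open>a v * b w = 1\<close> since the two angles add up
  to a right angle. As \<open>a\<close> and \<open>b\<close> are injective and \<open>a v + b v > 0\<close>, there is at most one such
  inverted pair, so at most two members on each side are involved in crossings.\<close>

lemma in_open_segment_iff_ray:
  fixes P X :: "'a::real_vector"
  shows "z \<in> open_segment P X \<longleftrightarrow> P \<noteq> X \<and> (\<exists>s. 0 < s \<and> s < 1 \<and> z = X + s *\<^sub>R (P - X))"
  by (auto simp: open_segment_commute[of P X] in_segment algebra_simps)

lemma open_segments_meet_iff:
  fixes P Q X Y :: "'a::real_vector"
  shows "open_segment P X \<inter> open_segment Q Y \<noteq> {} \<longleftrightarrow> P \<noteq> X \<and> Q \<noteq> Y \<and>
    (\<exists>s t. 0 < s \<and> s < 1 \<and> 0 < t \<and> t < 1 \<and> X + s *\<^sub>R (P - X) = Y + t *\<^sub>R (Q - Y))"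
proof
  assume "open_segment P X \<inter> open_segment Q Y \<noteq> {}"
  then obtain z where "z \<in> open_segment P X" "z \<in> open_segment Q Y"
    by blast
  then show "P \<noteq> X \<and> Q \<noteq> Y \<and>
    (\<exists>s t. 0 < s \<and> s < 1 \<and> 0 < t \<and> t < 1 \<and> X + s *\<^sub>R (P - X) = Y + t *\<^sub>R (Q - Y))"
    unfolding in_open_segment_iff_ray by blast
next
  assume "P \<noteq> X \<and> Q \<noteq> Y \<and>
    (\<exists>s t. 0 < s \<and> s < 1 \<and> 0 < t \<and> t < 1 \<and> X + s *\<^sub>R (P - X) = Y + t *\<^sub>R (Q - Y))"
  then obtain s t where "P \<noteq> X" "Q \<noteq> Y" "0 < s" "s < 1" "0 < t" "t < 1"
    and "X + s *\<^sub>R (P - X) = Y + t *\<^sub>R (Q - Y)"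
    by blast
  moreover have "X + s *\<^sub>R (P - X) \<in> open_segment P X" "Y + t *\<^sub>R (Q - Y) \<in> open_segment Q Y"
    unfolding in_open_segment_iff_ray using \<open>P \<noteq> X\<close> \<open>Q \<noteq> Y\<close> \<open>0 < s\<close> \<open>s < 1\<close> \<open>0 < t\<close> \<open>t < 1\<close>
    by blast+
  ultimately show "open_segment P X \<inter> open_segment Q Y \<noteq> {}"
    by auto
qed

lemma inner_pos_if_open_segments_meet:
  fixes P Q X :: "'a::real_inner"
  assumes "z \<in> open_segment P X" "z \<in> open_segment Q X"
  shows "0 < inner (P - X) (Q - X)"
proof -
  obtain s t where "P \<noteq> X" "0 < s" "0 < t"
    and "z = X + s *\<^sub>R (P - X)" "z = X + t *\<^sub>R (Q - X)"
    using assms by (auto simp: in_open_segment_iff_ray)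
  then have "t *\<^sub>R (Q - X) = s *\<^sub>R (P - X)"
    by (metis add_left_cancel)
  then have "t * inner (P - X) (Q - X) = s * inner (P - X) (P - X)"
    by (metis inner_scaleR_right)
  also have "\<dots> > 0"
    using \<open>P \<noteq> X\<close> \<open>0 < s\<close> by simp
  finally show ?thesis
    using \<open>0 < t\<close> by (simp add: zero_less_mult_iff)
qed

definition cross2 :: "pt \<Rightarrow> pt \<Rightarrow> real" where
  "cross2 U W = fst U * snd W - snd U * fst W"

lemma inner_self_mult_inner:
  "inner U U * inner V W = inner V U * inner W U + cross2 U V * cross2 U W"
  by (simp add: inner_prod_def cross2_def algebra_simps)

lemma eq_if_inner_cross2_eq:
  assumes "U \<noteq> 0" "inner Z U = inner W U" "cross2 U Z = cross2 U W"
  shows "Z = W"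
proof -
  have "inner (Z - W) U = 0" "cross2 U (Z - W) = 0"
    using assms(2,3) by (simp_all add: inner_diff_left cross2_def algebra_simps)
  then have "inner U U * inner (Z - W) (Z - W) = 0"
    using inner_self_mult_inner[of U "Z - W" "Z - W"] by simp
  then show ?thesis
    using assms(1) by simp
qed

text \<open>Coordinates of \<open>Z\<close> in the frame with origin \<open>A\<close> and first axis along \<open>B - A\<close>,
  both scaled by \<open>norm (B - A)\<close>; so \<open>A\<close> and \<open>B\<close> get the coordinates \<open>(0, 0)\<close> and \<open>(D, 0)\<close>
  with \<open>D = frame_x A B B\<close>.\<close>
definition frame_x :: "pt \<Rightarrow> pt \<Rightarrow> pt \<Rightarrow> real" where
  "frame_x A B Z = inner (Z - A) (B - A)"

definition frame_y :: "pt \<Rightarrow> pt \<Rightarrow> pt \<Rightarrow> real" where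
  "frame_y A B Z = cross2 (B - A) (Z - A)"

lemma frame_eq_iff:
  assumes "A \<noteq> B"
  shows "Z = W \<longleftrightarrow> frame_x A B Z = frame_x A B W \<and> frame_y A B Z = frame_y A B W"
  using eq_if_inner_cross2_eq[of "B - A" "Z - A" "W - A"] assms
  by (auto simp: frame_x_def frame_y_def)

lemma frame_base_points [simp]:
  "frame_x A B A = 0" "frame_y A B A = 0" "frame_y A B B = 0"
  by (simp_all add: frame_x_def frame_y_def cross2_def)

lemma frame_x_self_pos: "A \<noteq> B \<Longrightarrow> 0 < frame_x A B B"
  by (simp add: frame_x_def)

lemma frame_on_ray:
  "frame_x A B (A + s *\<^sub>R (P - A)) = s * frame_x A B P"
  "frame_y A B (A + s *\<^sub>R (P - A)) = s * frame_y A B P"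
  "frame_x A B (B + t *\<^sub>R (Q - B)) = frame_x A B B + t * (frame_x A B Q - frame_x A B B)"
  "frame_y A B (B + t *\<^sub>R (Q - B)) = t * frame_y A B Q"
  by (simp_all add: frame_x_def frame_y_def cross2_def inner_prod_def algebra_simps)

lemma frame_inner:
  "frame_x A B B * inner (P - A) (Q - B)
     = frame_x A B P * (frame_x A B Q - frame_x A B B) + frame_y A B P * frame_y A B Q"
  by (simp add: frame_x_def frame_y_def cross2_def inner_prod_def algebra_simps)

lemma frame_swap:
  "frame_x B A P = frame_x A B B - frame_x A B P"
  "frame_y B A P = - frame_y A B P"
  by (simp_all add: frame_x_def frame_y_def cross2_def inner_prod_def algebra_simps)

lemma mult_eq_iff_abs_if_same_sign:
  fixes a b s t :: real
  assumes "0 < a * b"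
  shows "s * a = t * b \<longleftrightarrow> s * \<bar>a\<bar> = t * \<bar>b\<bar>"
  using assms by (cases "0 < a") (auto simp: zero_less_mult_iff)

text \<open>Frame-coordinate form of the open segments from \<open>(xp, hp)\<close> to \<open>(0, 0)\<close> and from \<open>(xq, hq)\<close>
  to \<open>(D, 0)\<close> meeting; the ratios are the cotangents of the angles at the two base points.\<close>
lemma segment_parameters_iff:
  fixes D xp hp xq hq :: real
  assumes "0 < D" "0 < hp" "0 < hq"
  shows "(\<exists>s t. 0 < s \<and> s < 1 \<and> 0 < t \<and> t < 1 \<and> s * xp = D + t * (xq - D) \<and> s * hp = t * hq)
     \<longleftrightarrow> xq / hq < xp / hp \<and> (D - xp) / hp < (D - xq) / hq"
proof -
  have ratios: "xq / hq < xp / hp \<longleftrightarrow> xq * hp < xp * hq"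
      "(D - xp) / hp < (D - xq) / hq \<longleftrightarrow> (D - xp) * hq < (D - xq) * hp"
    using assms(2,3) by (simp_all add: field_simps)
  have "xq * hp < xp * hq \<and> (D - xp) * hq < (D - xq) * hp"
    if "0 < s" "s < 1" "0 < t" "t < 1" and x: "s * xp = D + t * (xq - D)" and h: "s * hp = t * hq"
    for s t
  proof
    have "s * (xp * hq) - s * (xq * hp) = (s * xp) * hq - xq * (s * hp)"
      by (simp add: algebra_simps)
    also have "\<dots> = D * (1 - t) * hq"
      unfolding x h by (simp add: algebra_simps)
    also have "\<dots> > 0"
      using that assms by simp
    finally show "xq * hp < xp * hq"
      using \<open>0 < s\<close> by simp
    have "t * ((D - xq) * hp) - t * ((D - xp) * hq)
        = (D - (D + t * (xq - D))) * hp + xp * (t * hq) - D * (t * hq)"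
      by (simp add: algebra_simps)
    also have "\<dots> = D * (1 - s) * hp"
      unfolding x[symmetric] h[symmetric] by (simp add: algebra_simps)
    also have "\<dots> > 0"
      using that assms by simp
    finally show "(D - xp) * hq < (D - xq) * hp"
      using \<open>0 < t\<close> by simp
  qed
  moreover have "\<exists>s t. 0 < s \<and> s < 1 \<and> 0 < t \<and> t < 1 \<and> s * xp = D + t * (xq - D) \<and> s * hp = t * hq"
    if c1: "xq * hp < xp * hq" and c2: "(D - xp) * hq < (D - xq) * hp"
  proof (intro exI conjI)
    define K where "K = xp * hq + (D - xq) * hp"
    have "D * hq < K" "D * hp < K"
      using c1 c2 by (simp_all add: K_def algebra_simps)
    moreover have "0 < D * hq" "0 < D * hp"
      using assms by simp_all
    ultimately have "0 < K"
      by linarith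
    show "0 < D * hq / K" "D * hq / K < 1" "0 < D * hp / K" "D * hp / K < 1"
      using \<open>0 < K\<close> \<open>D * hq < K\<close> \<open>D * hp < K\<close> \<open>0 < D * hq\<close> \<open>0 < D * hp\<close> by simp_all
    show "D * hq / K * xp = D + D * hp / K * (xq - D)" "D * hq / K * hp = D * hp / K * hq"
      using \<open>0 < K\<close> by (simp_all add: field_simps K_def)
  qed
  ultimately show ?thesis
    unfolding ratios by blast
qed

lemma segment_parameters_of_eq_ratio:
  fixes xp hp xq hq :: real
  assumes "0 < hp" "0 < hq" "xp / hp = xq / hq"
  shows "\<exists>s t. 0 < s \<and> s < 1 \<and> 0 < t \<and> t < 1 \<and> s * xp = t * xq \<and> s * hp = t * hq"
proof (intro exI conjI)
  have "xp * hq = xq * hp"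
    using assms by (simp add: field_simps)
  then show "hq / (hp + hq) * xp = hp / (hp + hq) * xq"
    by (simp add: field_simps)
  show "hq / (hp + hq) * hp = hp / (hp + hq) * hq"
    by simp
  show "0 < hq / (hp + hq)" "hq / (hp + hq) < 1" "0 < hp / (hp + hq)" "hp / (hp + hq) < 1"
    using assms by simp_all
qed

definition same_side :: "pt \<Rightarrow> pt \<Rightarrow> pt \<Rightarrow> pt \<Rightarrow> bool" where
  "same_side A B P Q \<longleftrightarrow> 0 < frame_y A B P * frame_y A B Q"

text \<open>The cotangent of the angle \<open>PAB\<close>; it is \<open>0\<close> when \<open>P\<close> lies on the line \<open>AB\<close>.\<close>
definition cot_angle :: "pt \<Rightarrow> pt \<Rightarrow> pt \<Rightarrow> real" where
  "cot_angle A B P = frame_x A B P / \<bar>frame_y A B P\<bar>"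

lemma same_side_swap: "same_side B A P Q \<longleftrightarrow> same_side A B P Q"
  by (simp add: same_side_def frame_swap[where A = A and B = B])

lemma cot_angle_swap: "cot_angle B A P = (frame_x A B B - frame_x A B P) / \<bar>frame_y A B P\<bar>"
  by (simp add: cot_angle_def frame_swap[where A = A and B = B])

lemma open_segments_meet_iff_cot_angle:
  assumes "A \<noteq> B" "same_side A B P Q"
  shows "open_segment P A \<inter> open_segment Q B \<noteq> {} \<longleftrightarrow>
         cot_angle A B Q < cot_angle A B P \<and> cot_angle B A P < cot_angle B A Q"
proof -
  let ?x = "frame_x A B" and ?y = "frame_y A B" and ?D = "frame_x A B B"
  have yy: "0 < ?y P * ?y Q"
    using assms(2) by (simp add: same_side_def)
  then have "P \<noteq> A" "Q \<noteq> B" "0 < \<bar>?y P\<bar>" "0 < \<bar>?y Q\<bar>"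
    by auto
  have "open_segment P A \<inter> open_segment Q B \<noteq> {} \<longleftrightarrow>
      (\<exists>s t. 0 < s \<and> s < 1 \<and> 0 < t \<and> t < 1 \<and> A + s *\<^sub>R (P - A) = B + t *\<^sub>R (Q - B))"
    using \<open>P \<noteq> A\<close> \<open>Q \<noteq> B\<close> by (simp add: open_segments_meet_iff)
  also have "\<dots> \<longleftrightarrow> (\<exists>s t. 0 < s \<and> s < 1 \<and> 0 < t \<and> t < 1 \<and>
      s * ?x P = ?D + t * (?x Q - ?D) \<and> s * \<bar>?y P\<bar> = t * \<bar>?y Q\<bar>)"
    by (simp add: frame_eq_iff[OF assms(1)] frame_on_ray mult_eq_iff_abs_if_same_sign[OF yy])
  also have "\<dots> \<longleftrightarrow> ?x Q / \<bar>?y Q\<bar> < ?x P / \<bar>?y P\<bar> \<and> (?D - ?x P) / \<bar>?y P\<bar> < (?D - ?x Q) / \<bar>?y Q\<bar>"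
    by (rule segment_parameters_iff)
      (use frame_x_self_pos[OF assms(1)] \<open>0 < \<bar>?y P\<bar>\<close> \<open>0 < \<bar>?y Q\<bar>\<close> in simp_all)
  finally show ?thesis
    unfolding cot_angle_swap[where A = A and B = B] by (simp add: cot_angle_def)
qed

lemma open_segments_meet_if_cot_angle_eq:
  assumes "A \<noteq> B" "same_side A B P Q" "cot_angle A B P = cot_angle A B Q"
  shows "open_segment P A \<inter> open_segment Q A \<noteq> {}"
proof -
  let ?x = "frame_x A B" and ?y = "frame_y A B"
  have yy: "0 < ?y P * ?y Q"
    using assms(2) by (simp add: same_side_def)
  then have "P \<noteq> A" "Q \<noteq> A" "0 < \<bar>?y P\<bar>" "0 < \<bar>?y Q\<bar>"
    by auto
  then obtain s t where st: "0 < s" "s < 1" "0 < t" "t < 1"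
    "s * ?x P = t * ?x Q" "s * \<bar>?y P\<bar> = t * \<bar>?y Q\<bar>"
    using segment_parameters_of_eq_ratio[of "\<bar>?y P\<bar>" "\<bar>?y Q\<bar>" "?x P" "?x Q"] assms(3)
    by (auto simp: cot_angle_def)
  then have "A + s *\<^sub>R (P - A) = A + t *\<^sub>R (Q - A)"
    by (simp add: frame_eq_iff[OF assms(1)] frame_on_ray mult_eq_iff_abs_if_same_sign[OF yy])
  moreover have "A + s *\<^sub>R (P - A) \<in> open_segment P A" "A + t *\<^sub>R (Q - A) \<in> open_segment Q A"
    using st \<open>P \<noteq> A\<close> \<open>Q \<noteq> A\<close> by (auto simp: in_open_segment_iff_ray)
  ultimately show ?thesis
    by auto
qed

lemma same_side_if_orthogonal_open_segments_meet:
  assumes "A \<noteq> B" "open_segment P A \<inter> open_segment Q B \<noteq> {}" "inner (P - A) (Q - B) = 0"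
  shows "same_side A B P Q"
proof -
  let ?x = "frame_x A B" and ?y = "frame_y A B" and ?D = "frame_x A B B"
  obtain s t where "P \<noteq> A" "Q \<noteq> B" "0 < s" "0 < t" and "A + s *\<^sub>R (P - A) = B + t *\<^sub>R (Q - B)"
    using assms(2) unfolding open_segments_meet_iff by blast
  then have x: "s * ?x P = ?D + t * (?x Q - ?D)" and y: "s * ?y P = t * ?y Q"
    by (simp_all add: frame_eq_iff[OF assms(1)] frame_on_ray)
  have orth: "?x P * (?x Q - ?D) + ?y P * ?y Q = 0"
    using frame_inner[of A B P Q] assms(3) by simp
  have "s * (?y P * ?y Q) = t * (?y Q)\<^sup>2"
    using y by (simp add: power2_eq_square flip: mult.assoc)
  then have "s * 0 \<le> s * (?y P * ?y Q)"
    using \<open>0 < t\<close> by simp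
  then have "0 \<le> ?y P * ?y Q"
    using \<open>0 < s\<close> mult_le_cancel_left_pos by blast
  show ?thesis
  proof (rule ccontr)
    assume "\<not> same_side A B P Q"
    then have "?y P * ?y Q = 0"
      using \<open>0 \<le> ?y P * ?y Q\<close> by (simp add: same_side_def)
    then have "?y P = 0" "?y Q = 0"
      using y \<open>0 < s\<close> \<open>0 < t\<close> by auto
    then have "?x P = 0 \<or> ?x Q = ?D"
      using orth by simp
    then show False
      using \<open>P \<noteq> A\<close> \<open>Q \<noteq> B\<close> \<open>?y P = 0\<close> \<open>?y Q = 0\<close> frame_eq_iff[OF assms(1)] by auto
  qed
qed

lemma cot_angle_mult_eq_1_if_orthogonal:
  assumes "A \<noteq> B" "same_side A B P Q" "inner (P - A) (Q - B) = 0"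
  shows "cot_angle A B P * cot_angle B A Q = 1"
proof -
  let ?x = "frame_x A B" and ?y = "frame_y A B" and ?D = "frame_x A B B"
  have yy: "0 < ?y P * ?y Q"
    using assms(2) by (simp add: same_side_def)
  have "?x P * (?x Q - ?D) + ?y P * ?y Q = 0"
    using frame_inner[of A B P Q] assms(3) by simp
  then have "?x P * (?D - ?x Q) = ?y P * ?y Q"
    by (simp add: algebra_simps)
  also have "\<dots> = \<bar>?y P\<bar> * \<bar>?y Q\<bar>"
    using yy by (simp add: abs_mult[symmetric])
  finally have "?x P * (?D - ?x Q) = \<bar>?y P\<bar> * \<bar>?y Q\<bar>" .
  moreover have "?y P \<noteq> 0" "?y Q \<noteq> 0"
    using yy by auto
  ultimately show ?thesis
    unfolding cot_angle_swap[where A = A and B = B] by (simp add: cot_angle_def)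
qed

lemma cot_angle_add_pos:
  assumes "A \<noteq> B" "frame_y A B P \<noteq> 0"
  shows "0 < cot_angle A B P + cot_angle B A P"
  using assms frame_x_self_pos[OF assms(1)]
  unfolding cot_angle_swap[where A = A and B = B]
  by (simp add: cot_angle_def add_divide_distrib[symmetric])

lemma inverted_pair_unique:
  fixes a b :: "'p \<Rightarrow> real"
  assumes inj: "inj_on a M" "inj_on b M"
    and prod: "\<And>p q. p \<in> M \<Longrightarrow> q \<in> M \<Longrightarrow> a q < a p \<Longrightarrow> b p < b q \<Longrightarrow> a p * b q = 1"
    and pos: "\<And>p. p \<in> M \<Longrightarrow> 0 < a p + b p"
    and M: "u \<in> M" "v \<in> M" "x \<in> M" "y \<in> M"
    and uv: "a v < a u" "b u < b v" and xy: "a y < a x" "b x < b y"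
  shows "x = u \<and> y = v"
proof -
  have pos_pair: "0 < a p \<and> 0 < b q"
    if "p \<in> M" "q \<in> M" "a q < a p" "b p < b q" for p q
  proof -
    have "0 < a p + b q"
      using pos[OF \<open>q \<in> M\<close>] \<open>a q < a p\<close> by linarith
    moreover have "a p * b q = 1"
      using prod that by blast
    ultimately show ?thesis
      using zero_less_mult_iff[of "a p" "b q"] by auto
  qed
  have not_less: "\<not> a p < a p'"
    if "p \<in> M" "q \<in> M" "a q < a p" "b p < b q"
      and "p' \<in> M" "q' \<in> M" "a q' < a p'" "b p' < b q'" for p q p' q'
  proof
    assume less: "a p < a p'"
    have "b q < b p'"
    proof (rule ccontr)
      assume "\<not> b q < b p'"
      moreover have "b p' \<noteq> b q"
        using inj(2) that less by (metis inj_on_eq_iff less_irrefl less_trans)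
      ultimately have "b p' < b q"
        by linarith
      then have "a p' * b q = a p * b q"
        using prod that less by (metis less_trans)
      then show False
        using pos_pair[OF that(1-4)] less by simp
    qed
    then have "a p * b q < a p' * b q'"
      using pos_pair[OF that(1-4)] pos_pair[OF that(5-8)] less \<open>b p' < b q'\<close>
      by (intro mult_strict_mono) auto
    then show False
      using prod that by simp
  qed
  have "a x = a u"
    using not_less[OF M(1,2) uv M(3,4) xy] not_less[OF M(3,4) xy M(1,2) uv] by linarith
  then have "x = u"
    using inj(1) M by (simp add: inj_on_eq_iff)
  then have "a u * b y = a u * b v"
    using prod M uv xy by simp
  then have "b y = b v"
    using pos_pair[OF M(1,2) uv] by simp
  then show ?thesis
    using \<open>x = u\<close> inj(2) M by (simp add: inj_on_eq_iff)
qed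

lemma inverted_points_subset_pair:
  fixes a b :: "'p \<Rightarrow> real"
  assumes "inj_on a M" "inj_on b M"
    and "\<And>p q. p \<in> M \<Longrightarrow> q \<in> M \<Longrightarrow> a q < a p \<Longrightarrow> b p < b q \<Longrightarrow> a p * b q = 1"
    and "\<And>p. p \<in> M \<Longrightarrow> 0 < a p + b p"
  shows "\<exists>u v. {p \<in> M. \<exists>q \<in> M. a q < a p \<and> b p < b q \<or> a p < a q \<and> b q < b p} \<subseteq> {u, v}"
proof (cases "\<exists>u \<in> M. \<exists>v \<in> M. a v < a u \<and> b u < b v")
  case True
  then obtain u v where uv: "u \<in> M" "v \<in> M" "a v < a u" "b u < b v"
    by blast
  have "{p \<in> M. \<exists>q \<in> M. a q < a p \<and> b p < b q \<or> a p < a q \<and> b q < b p} \<subseteq> {u, v}"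
    using inverted_pair_unique[OF assms uv(1,2) _ _ uv(3,4)] uv(1,2) by blast
  then show ?thesis
    by blast
qed auto

lemma inj_on_cot_angle_if_not_orthogonal:
  assumes "A \<noteq> B"
    and side: "\<And>P Q. P \<in> H \<Longrightarrow> Q \<in> H \<Longrightarrow> same_side A B P Q"
    and rac: "\<And>P Q. P \<in> H \<Longrightarrow> Q \<in> H \<Longrightarrow> P \<noteq> Q \<Longrightarrow>
      open_segment P A \<inter> open_segment Q A \<noteq> {} \<Longrightarrow> inner (P - A) (Q - A) = 0"
  shows "inj_on (cot_angle A B) H"
proof (rule inj_onI, rule ccontr)
  fix P Q
  assume "P \<in> H" "Q \<in> H" "cot_angle A B P = cot_angle A B Q" "P \<noteq> Q"
  moreover obtain z where "z \<in> open_segment P A" "z \<in> open_segment Q A"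
    using open_segments_meet_if_cot_angle_eq[OF assms(1) side] calculation by blast
  ultimately have "inner (P - A) (Q - A) = 0" "0 < inner (P - A) (Q - A)"
    using rac inner_pos_if_open_segments_meet by blast+
  then show False
    by simp
qed

lemma same_side_crossings_subset_pair:
  assumes "A \<noteq> B"
    and side: "\<And>P Q. P \<in> H \<Longrightarrow> Q \<in> H \<Longrightarrow> same_side A B P Q"
    and rac: "\<And>P Q X Y. P \<in> H \<Longrightarrow> Q \<in> H \<Longrightarrow> P \<noteq> Q \<Longrightarrow> X \<in> {A, B} \<Longrightarrow> Y \<in> {A, B} \<Longrightarrow>
      open_segment P X \<inter> open_segment Q Y \<noteq> {} \<Longrightarrow> inner (P - X) (Q - Y) = 0"
  shows "\<exists>u v. {P \<in> H. \<exists>Q \<in> H. open_segment P A \<inter> open_segment Q B \<noteq> {}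
                              \<or> open_segment Q A \<inter> open_segment P B \<noteq> {}} \<subseteq> {u, v}"
proof -
  have inj: "inj_on (cot_angle A B) H" "inj_on (cot_angle B A) H"
    using inj_on_cot_angle_if_not_orthogonal[of A B H] inj_on_cot_angle_if_not_orthogonal[of B A H]
      assms same_side_swap by auto
  have meet_iff: "open_segment P A \<inter> open_segment Q B \<noteq> {} \<longleftrightarrow>
      cot_angle A B Q < cot_angle A B P \<and> cot_angle B A P < cot_angle B A Q"
    if "P \<in> H" "Q \<in> H" for P Q
    using open_segments_meet_iff_cot_angle[OF assms(1) side[OF that]] .
  have "\<exists>u v. {P \<in> H. \<exists>Q \<in> H. cot_angle A B Q < cot_angle A B P \<and> cot_angle B A P < cot_angle B A Q
      \<or> cot_angle A B P < cot_angle A B Q \<and> cot_angle B A Q < cot_angle B A P} \<subseteq> {u, v}"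
  proof (rule inverted_points_subset_pair)
    show "inj_on (cot_angle A B) H" "inj_on (cot_angle B A) H"
      by (fact inj)+
    show "cot_angle A B P * cot_angle B A Q = 1"
      if "P \<in> H" "Q \<in> H" "cot_angle A B Q < cot_angle A B P" "cot_angle B A P < cot_angle B A Q"
      for P Q
    proof (rule cot_angle_mult_eq_1_if_orthogonal)
      show "inner (P - A) (Q - B) = 0"
        using rac[of P Q A B] meet_iff that by auto
    qed (use assms(1) side that in auto)
    show "0 < cot_angle A B P + cot_angle B A P" if "P \<in> H" for P
    proof (rule cot_angle_add_pos[OF assms(1)])
      show "frame_y A B P \<noteq> 0"
        using side[OF that that] by (auto simp: same_side_def)
    qed
  qed
  then show ?thesis
    using meet_iff by blast
qed

lemma orthogonal_fan_crossing_same_side: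
  assumes "A \<noteq> B" "X \<in> {A, B}" "Y \<in> {A, B}"
    and meet: "open_segment P X \<inter> open_segment Q Y \<noteq> {}" and orth: "inner (P - X) (Q - Y) = 0"
  shows "same_side A B P Q \<and>
    (open_segment P A \<inter> open_segment Q B \<noteq> {} \<or> open_segment Q A \<inter> open_segment P B \<noteq> {})"
proof -
  have "X \<noteq> Y"
    using meet orth inner_pos_if_open_segments_meet by fastforce
  then consider "X = A" "Y = B" | "X = B" "Y = A"
    using assms(2,3) by blast
  then show ?thesis
  proof cases
    case 1
    then show ?thesis
      using same_side_if_orthogonal_open_segments_meet[OF assms(1)] meet orth by simp
  next
    case 2
    then have "same_side A B Q P"
      using same_side_if_orthogonal_open_segments_meet[OF assms(1)] meet orth
      by (simp add: Int_commute inner_commute)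
    then show ?thesis
      using meet 2 by (simp add: same_side_def mult.commute Int_commute)
  qed
qed

lemma rac_double_fan_crossing_points_card_le_4:
  fixes A B :: pt and Ps :: "pt set"
  assumes "A \<noteq> B"
    and rac: "\<And>P Q X Y. P \<in> Ps \<Longrightarrow> Q \<in> Ps \<Longrightarrow> P \<noteq> Q \<Longrightarrow> X \<in> {A, B} \<Longrightarrow> Y \<in> {A, B} \<Longrightarrow>
      open_segment P X \<inter> open_segment Q Y \<noteq> {} \<Longrightarrow> inner (P - X) (Q - Y) = 0"
  shows "card {P \<in> Ps. \<exists>Q \<in> Ps. Q \<noteq> P \<and>
      (\<exists>X \<in> {A, B}. \<exists>Y \<in> {A, B}. open_segment P X \<inter> open_segment Q Y \<noteq> {})} \<le> 4"
    (is "card ?S \<le> 4")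
proof -
  define H where "H \<sigma> = {P \<in> Ps. 0 < \<sigma> * frame_y A B P}" for \<sigma> :: real
  define crossing where "crossing H = {P \<in> H. \<exists>Q \<in> H. open_segment P A \<inter> open_segment Q B \<noteq> {}
      \<or> open_segment Q A \<inter> open_segment P B \<noteq> {}}" for H
  have "\<exists>u v. crossing (H \<sigma>) \<subseteq> {u, v}" if "\<sigma> = 1 \<or> \<sigma> = -1" for \<sigma>
    unfolding crossing_def
  proof (rule same_side_crossings_subset_pair[OF assms(1)])
    show "same_side A B P Q" if "P \<in> H \<sigma>" "Q \<in> H \<sigma>" for P Q
      using that \<open>\<sigma> = 1 \<or> \<sigma> = -1\<close> by (auto simp: H_def same_side_def zero_less_mult_iff)
  qed (use rac in \<open>auto simp: H_def\<close>)
  then obtain u v u' v' where "crossing (H 1) \<subseteq> {u, v}" "crossing (H (-1)) \<subseteq> {u', v'}"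
    by (metis equation_minus_iff)
  moreover have "?S \<subseteq> crossing (H 1) \<union> crossing (H (-1))"
  proof
    fix P
    assume "P \<in> ?S"
    then obtain Q X Y where "P \<in> Ps" "Q \<in> Ps" "Q \<noteq> P" and XY: "X \<in> {A, B}" "Y \<in> {A, B}"
      and meet: "open_segment P X \<inter> open_segment Q Y \<noteq> {}"
      by blast
    then have "inner (P - X) (Q - Y) = 0"
      using rac by blast
    then have "same_side A B P Q \<and>
        (open_segment P A \<inter> open_segment Q B \<noteq> {} \<or> open_segment Q A \<inter> open_segment P B \<noteq> {})"
      by (rule orthogonal_fan_crossing_same_side[OF assms(1) XY meet])
    moreover have "P \<in> H 1 \<and> Q \<in> H 1 \<or> P \<in> H (-1) \<and> Q \<in> H (-1)"
      if "same_side A B P Q"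
      using that \<open>P \<in> Ps\<close> \<open>Q \<in> Ps\<close> by (auto simp: H_def same_side_def zero_less_mult_iff)
    ultimately show "P \<in> crossing (H 1) \<union> crossing (H (-1))"
      unfolding crossing_def by blast
  qed
  ultimately have "?S \<subseteq> {u, v, u', v'}"
    by blast
  then have "card ?S \<le> card {u, v, u', v'}"
    by (rule card_mono[rotated]) simp
  also have "\<dots> \<le> 4"
    by (auto simp: card_insert_if)
  finally show ?thesis .
qed

lemma polyline_no_bends:
  assumes "polyline ps" "bends ps = 0"
  shows "ps = [hd ps, last ps]"
proof -
  have "length ps = 2"
    using assms by (simp add: polyline_def bends_def)
  then show ?thesis
    by (auto simp: numeral_2_eq_2 length_Suc_conv)
qed

lemma straight_edge_drawing:
  assumes "polyline_drawing V E pos pl" "{u, x} \<in> E" "bends (pl {u, x}) = 0"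
  shows "pl {u, x} = [pos u, pos x] \<or> pl {u, x} = [pos x, pos u]"
proof -
  have "polyline (pl {u, x})" "{hd (pl {u, x}), last (pl {u, x})} = {pos u, pos x}"
    using assms(1,2) by (auto simp: polyline_drawing_def)
  then show ?thesis
    using polyline_no_bends[OF _ assms(3)] by (metis doubleton_eq_iff)
qed

lemma edge_interior_two_points: "edge_interior [P, Q] = open_segment P Q"
proof -
  have "{i. Suc i < length [P, Q]} = {0}"
    by auto
  then show ?thesis
    by (simp add: edge_interior_def curve_def seg_def open_segment_def)
qed

lemma edge_interior_straight_edge:
  assumes "polyline_drawing V E pos pl" "{u, x} \<in> E" "bends (pl {u, x}) = 0"
  shows "edge_interior (pl {u, x}) = open_segment (pos u) (pos x)"
  using straight_edge_drawing[OF assms]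
  by (auto simp: edge_interior_two_points open_segment_commute)

lemma right_angle_at_two_points: "right_angle_at [P, Q] [R, S] z \<Longrightarrow> inner (Q - P) (S - R) = 0"
  by (auto simp: right_angle_at_def)

lemma right_angle_at_segments:
  assumes "ps = [P, Q] \<or> ps = [Q, P]" "qs = [R, S] \<or> qs = [S, R]" "right_angle_at ps qs z"
  shows "inner (P - Q) (R - S) = 0"
proof -
  have "inner (Q - P) (S - R) = inner (P - Q) (R - S)" "inner (P - Q) (S - R) = - inner (P - Q) (R - S)"
    "inner (Q - P) (R - S) = - inner (P - Q) (R - S)"
    by (simp_all add: inner_diff_left inner_diff_right)
  with assms show ?thesis
    by (elim disjE) (simp_all add: right_angle_at_two_points)
qed

lemma rac_straight_edges_orthogonal:
  assumes rac: "rac_drawing V E b \<beta> pos pl"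
    and e: "{u, x} \<in> E" "bends (pl {u, x}) = 0"
    and f: "{w, y} \<in> E" "bends (pl {w, y}) = 0"
    and "{u, x} \<noteq> {w, y}"
    and "open_segment (pos u) (pos x) \<inter> open_segment (pos w) (pos y) \<noteq> {}"
  shows "inner (pos u - pos x) (pos w - pos y) = 0"
proof -
  have drawing: "polyline_drawing V E pos pl"
    using rac by (simp add: rac_drawing_def)
  obtain z where "z \<in> open_segment (pos u) (pos x)" "z \<in> open_segment (pos w) (pos y)"
    using assms(7) by blast
  then have "z \<in> edge_interior (pl {u, x}) \<inter> edge_interior (pl {w, y})"
    by (simp add: edge_interior_straight_edge[OF drawing e] edge_interior_straight_edge[OF drawing f])
  moreover have "\<forall>e\<in>E. \<forall>f\<in>E. e \<noteq> f \<longrightarrow>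
      (\<forall>p \<in> edge_interior (pl e) \<inter> edge_interior (pl f). right_angle_at (pl e) (pl f) p)"
    using rac by (simp add: rac_drawing_def)
  ultimately have "right_angle_at (pl {u, x}) (pl {w, y}) z"
    using e(1) f(1) assms(6) by simp
  then show ?thesis
    by (rule right_angle_at_segments[OF straight_edge_drawing[OF drawing e]
          straight_edge_drawing[OF drawing f]])
qed

lemma crosses_straight_edges:
  assumes "polyline_drawing V E pos pl"
    and "{u, x} \<in> E" "bends (pl {u, x}) = 0" "{w, y} \<in> E" "bends (pl {w, y}) = 0"
    and "crosses pl {u, x} {w, y}"
  shows "open_segment (pos u) (pos x) \<inter> open_segment (pos w) (pos y) \<noteq> {}"
  using assms(6)
  by (simp add: crosses_def edge_interior_straight_edge[OF assms(1-3)] edge_interior_straight_edge[OF assms(1,4,5)])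

lemma incident_edges_of_two_cover_neighbours:
  assumes "simple_graph V E" "vertex_cover V E C" "v \<notin> C" "nbrs E v \<inter> C = {a, c}"
  shows "{e \<in> E. v \<in> e} = {{v, a}, {v, c}}"
proof -
  have "e \<in> {{v, a}, {v, c}}" if "e \<in> E" "v \<in> e" for e
  proof -
    obtain p q where "e = {p, q}"
      using assms(1) \<open>e \<in> E\<close> unfolding simple_graph_def card_2_iff by blast
    then have "e = {v, q} \<or> e = {v, p}"
      using \<open>v \<in> e\<close> by (auto simp: doubleton_eq_iff)
    then obtain u where e: "e = {v, u}"
      by blast
    have "e \<inter> C \<noteq> {}"
      using assms(2) \<open>e \<in> E\<close> by (simp add: vertex_cover_def)
    then have "u \<in> C"
      using e assms(3) by auto
    moreover have "u \<in> nbrs E v"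
      using \<open>e \<in> E\<close> unfolding e nbrs_def by (simp add: insert_commute)
    ultimately have "u \<in> {a, c}"
      using assms(4) by auto
    then show ?thesis
      using e by auto
  qed
  moreover have "{v, a} \<in> E" "{v, c} \<in> E"
    using assms(4) unfolding nbrs_def by (auto simp: insert_commute)
  ultimately show ?thesis
    by blast
qed

lemma type_incident_edges:
  assumes "simple_graph V E" "vertex_cover V E C" "is_type V E C T"
    and "\<forall>v\<in>T. card (nbrs E v \<inter> C) = 2"
  obtains a c where "a \<in> C" "c \<in> C" "a \<noteq> c" "T \<subseteq> V - C"
    and "\<And>v. v \<in> T \<Longrightarrow> {e \<in> E. v \<in> e} = {{v, a}, {v, c}}"
proof -
  obtain v0 where T: "T = {w \<in> V - C. nbrs E w \<inter> C = nbrs E v0 \<inter> C}" and "v0 \<in> V - C"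
    using assms(3) unfolding is_type_def by blast
  then have "v0 \<in> T"
    by simp
  then have "card (nbrs E v0 \<inter> C) = 2"
    using assms(4) by blast
  then obtain a c where "a \<noteq> c" and ac: "nbrs E v0 \<inter> C = {a, c}"
    unfolding card_2_iff by blast
  have "{e \<in> E. v \<in> e} = {{v, a}, {v, c}}" if "v \<in> T" for v
    using incident_edges_of_two_cover_neighbours[OF assms(1,2)] that by (simp add: T ac)
  moreover have "a \<in> C" "c \<in> C" "T \<subseteq> V - C"
    using ac T by auto
  ultimately show ?thesis
    using that \<open>a \<noteq> c\<close> by blast
qed

lemma fan_member_edges:
  assumes "{e \<in> E. v \<in> e} = {{v, a}, {v, c}}" "member_no_bends E pl v" "x \<in> {a, c}"
  shows "{v, x} \<in> E" "bends (pl {v, x}) = 0"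
  using assms unfolding member_no_bends_def by auto

lemma fan_members_positions_orthogonal:
  assumes rac: "rac_drawing V E b \<beta> pos pl" and "M \<subseteq> V - {a, c}"
    and incident: "\<And>v. v \<in> M \<Longrightarrow> {e \<in> E. v \<in> e} = {{v, a}, {v, c}}"
    and no_bends: "\<And>v. v \<in> M \<Longrightarrow> member_no_bends E pl v"
    and "P \<in> pos ` M" "Q \<in> pos ` M" "P \<noteq> Q" "X \<in> {pos a, pos c}" "Y \<in> {pos a, pos c}"
    and meet: "open_segment P X \<inter> open_segment Q Y \<noteq> {}"
  shows "inner (P - X) (Q - Y) = 0"
proof -
  obtain v w x y where vw: "v \<in> M" "w \<in> M" "v \<noteq> w" and xy: "x \<in> {a, c}" "y \<in> {a, c}"
    and "P = pos v" "Q = pos w" "X = pos x" "Y = pos y"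
    using assms(5-9) by blast
  moreover have "{v, x} \<noteq> {w, y}"
    using vw xy assms(2) by (auto simp: doubleton_eq_iff)
  ultimately show ?thesis
    using rac_straight_edges_orthogonal[OF rac
        fan_member_edges[OF incident no_bends, OF vw(1) vw(1) xy(1)]
        fan_member_edges[OF incident no_bends, OF vw(2) vw(2) xy(2)]] meet
    by simp
qed

lemma fan_members_crossing_positions:
  assumes drawing: "polyline_drawing V E pos pl" and "M \<subseteq> V"
    and incident: "\<And>v. v \<in> M \<Longrightarrow> {e \<in> E. v \<in> e} = {{v, a}, {v, c}}"
    and no_bends: "\<And>v. v \<in> M \<Longrightarrow> member_no_bends E pl v"
  shows "pos ` {v \<in> M. \<exists>w \<in> M. w \<noteq> v \<and> (\<exists>e\<in>E. \<exists>f\<in>E. v \<in> e \<and> w \<in> f \<and> crosses pl e f)}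
    \<subseteq> {P \<in> pos ` M. \<exists>Q \<in> pos ` M. Q \<noteq> P \<and>
        (\<exists>X \<in> {pos a, pos c}. \<exists>Y \<in> {pos a, pos c}. open_segment P X \<inter> open_segment Q Y \<noteq> {})}"
    (is "pos ` ?S \<subseteq> ?G")
proof
  fix P
  assume "P \<in> pos ` ?S"
  then obtain v w e f where "P = pos v" and vw: "v \<in> M" "w \<in> M" "w \<noteq> v"
    and ef: "e \<in> E" "f \<in> E" "v \<in> e" "w \<in> f" "crosses pl e f"
    by blast
  have "e \<in> {e \<in> E. v \<in> e}" "f \<in> {f \<in> E. w \<in> f}"
    using ef by simp_all
  then have "e \<in> {{v, a}, {v, c}}" "f \<in> {{w, a}, {w, c}}"
    by (simp_all only: incident[OF vw(1)] incident[OF vw(2)])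
  then obtain x y where xy: "x \<in> {a, c}" "y \<in> {a, c}" "e = {v, x}" "f = {w, y}"
    by auto
  then have "open_segment (pos v) (pos x) \<inter> open_segment (pos w) (pos y) \<noteq> {}"
    using crosses_straight_edges[OF drawing
        fan_member_edges[OF incident no_bends, OF vw(1) vw(1) xy(1)]
        fan_member_edges[OF incident no_bends, OF vw(2) vw(2) xy(2)]] ef(5)
    by simp
  moreover have "pos x \<in> {pos a, pos c}" "pos y \<in> {pos a, pos c}"
    using xy by auto
  ultimately have "\<exists>X \<in> {pos a, pos c}. \<exists>Y \<in> {pos a, pos c}.
      open_segment (pos v) X \<inter> open_segment (pos w) Y \<noteq> {}"
    by blast
  moreover have "pos w \<noteq> pos v"
    using drawing vw assms(2) by (auto simp: polyline_drawing_def dest: inj_onD)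
  moreover have "pos v \<in> pos ` M" "pos w \<in> pos ` M"
    using vw by simp_all
  ultimately show "P \<in> ?G"
    using \<open>P = pos v\<close> by blast
qed

lemma rac_straight_double_fan_crossing_members_card_le_4:
  assumes rac: "rac_drawing V E b \<beta> pos pl"
    and "a \<in> V" "c \<in> V" "a \<noteq> c" "M \<subseteq> V - {a, c}" "finite M"
    and incident: "\<And>v. v \<in> M \<Longrightarrow> {e \<in> E. v \<in> e} = {{v, a}, {v, c}}"
    and no_bends: "\<And>v. v \<in> M \<Longrightarrow> member_no_bends E pl v"
  shows "card {v \<in> M. \<exists>w \<in> M. w \<noteq> v \<and> (\<exists>e\<in>E. \<exists>f\<in>E. v \<in> e \<and> w \<in> f \<and> crosses pl e f)} \<le> 4"
    (is "card ?S \<le> 4")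
proof -
  have drawing: "polyline_drawing V E pos pl"
    using rac by (simp add: rac_drawing_def)
  then have inj: "inj_on pos V"
    by (simp add: polyline_drawing_def)
  let ?G = "{P \<in> pos ` M. \<exists>Q \<in> pos ` M. Q \<noteq> P \<and>
    (\<exists>X \<in> {pos a, pos c}. \<exists>Y \<in> {pos a, pos c}. open_segment P X \<inter> open_segment Q Y \<noteq> {})}"
  have "pos a \<noteq> pos c"
    using inj assms(2-4) by (auto dest: inj_onD)
  then have "card ?G \<le> 4"
    using fan_members_positions_orthogonal[OF rac assms(5) incident no_bends]
    by (intro rac_double_fan_crossing_points_card_le_4)
  have "M \<subseteq> V"
    using assms(5) by blast
  then have "inj_on pos ?S"
    using inj by (auto intro: inj_on_subset)
  then have "card ?S = card (pos ` ?S)"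
    by (rule card_image[symmetric])
  also have "\<dots> \<le> card ?G"
    using fan_members_crossing_positions[OF drawing \<open>M \<subseteq> V\<close> incident no_bends] assms(6)
    by (intro card_mono) simp_all
  finally show ?thesis
    using \<open>card ?G \<le> 4\<close> by linarith
qed

theorem lemma10:
  fixes V :: "'v set" and E :: "'v set set" and b :: nat and \<beta> :: "'v set \<Rightarrow> nat"
    and C T :: "'v set" and pos :: "'v \<Rightarrow> pt" and pl :: "'v set \<Rightarrow> pt list"
  assumes "simple_graph V E"
    and "\<forall>e\<in>E. \<beta> e \<le> 3"
    and "vertex_cover V E C"
    and "rac_drawing V E b \<beta> pos pl"
    and "is_type V E C T"
    and "\<forall>v\<in>T. card (nbrs E v \<inter> C) = 2"
  shows "card {v \<in> {u \<in> T. member_no_bends E pl u}.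
            \<exists>w \<in> {u \<in> T. member_no_bends E pl u}. w \<noteq> v \<and>
              (\<exists>e\<in>E. \<exists>f\<in>E. v \<in> e \<and> w \<in> f \<and> crosses pl e f)} \<le> 4"
proof -
  obtain a c where ac: "a \<in> C" "c \<in> C" "a \<noteq> c" "T \<subseteq> V - C"
    and incident: "\<And>v. v \<in> T \<Longrightarrow> {e \<in> E. v \<in> e} = {{v, a}, {v, c}}"
    using type_incident_edges[OF assms(1,3,5,6)] by blast
  have "C \<subseteq> V" "finite V"
    using assms(1,3) by (simp_all add: vertex_cover_def simple_graph_def)
  show ?thesis
  proof (rule rac_straight_double_fan_crossing_members_card_le_4[OF assms(4)])
    show "a \<in> V" "c \<in> V" "a \<noteq> c" "{u \<in> T. member_no_bends E pl u} \<subseteq> V - {a, c}"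
      using ac \<open>C \<subseteq> V\<close> by auto
    show "finite {u \<in> T. member_no_bends E pl u}"
      using ac(4) \<open>finite V\<close> by (auto intro: finite_subset)
  qed (use incident in auto)
qed

end
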